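(* Let $R\ge1$ be an integer, $L=6R$, $\eta=n^{1/(2L)}$, and $\mu_*^A=\frac12+2\sum_{k:\,1\le2k+1\le L}\eta^{-(2k+1)}$. For any $\ell\in\{0,1,\ldots,L\}$ and any $\sigma^A\in\mathcal{D}_\ell^A$, $\Pr_{\mu^A\sim\sigma^A}[\mu^A=\mu_*^A]\le e^{4\ell/\eta}\eta^{-2d_1}$, where $d_1$ is the number of odd integers in $\{\ell+1,\ldots,L\}$.
   Context: For $\ell\in\{0,\ldots,L\}$, $S_\ell^A$ is the set of all numbers $\frac12+2\sum_{k:\,1\le2k+1\le\ell}\eta^{-(2k+1)}+2\sum_{k:\,\ell<2k+1\le L}X_{2k+1}\eta^{-(2k+1)}$ with all $X_{2k+1}\in\{0,1\}$. $\pi^A$ is the distribution of $\frac12+2\sum_{k:\,1\le2k+1\le L}X_{2k+1}\eta^{-(2k+1)}$ with $X_{2k+1}$ independent Bernoulli with mean $\eta^{-2}$. $\mathcal{D}_\ell^A$ is the class of distributions $\sigma^A$ with support $S_\ell^A$ such that for all $x,y\in S_\ell^A$, $\frac{\Pr_{\sigma^A}[x]}{\Pr_{\sigma^A}[y]}=\frac{\Pr_{\pi^A}[x]}{\Pr_{\pi^A}[y]}\cdot e^{c}$ for some $c\in[-4\ell/\eta,4\ell/\eta]$. *)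

theory Defs
  imports "HOL-Probability.Probability"
begin

definition oddIdx :: "nat \<Rightarrow> nat set" where
  "oddIdx L = {j. odd j \<and> 1 \<le> j \<and> j \<le> L}"

definition muA :: "real \<Rightarrow> nat \<Rightarrow> (nat \<Rightarrow> bool) \<Rightarrow> real" where
  "muA \<eta> L X = 1/2 + 2 * (\<Sum>j\<in>oddIdx L. (if X j then 1 else 0) / \<eta> ^ j)"

definition SA :: "real \<Rightarrow> nat \<Rightarrow> nat \<Rightarrow> real set" where
  "SA \<eta> L l = {1/2 + 2 * (\<Sum>j\<in>{j\<in>oddIdx L. j \<le> l}. 1 / \<eta> ^ j)
                     + 2 * (\<Sum>j\<in>{j\<in>oddIdx L. l < j}. (if X j then 1 else 0) / \<eta> ^ j) | X. True}"

definition piA :: "real \<Rightarrow> nat \<Rightarrow> real pmf" where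
  "piA \<eta> L = map_pmf (muA \<eta> L) (Pi_pmf (oddIdx L) False (\<lambda>_. bernoulli_pmf (1 / \<eta>^2)))"

definition DA :: "real \<Rightarrow> nat \<Rightarrow> nat \<Rightarrow> real pmf set" where
  "DA \<eta> L l = {\<sigma>. set_pmf \<sigma> = SA \<eta> L l \<and>
     (\<forall>x\<in>SA \<eta> L l. \<forall>y\<in>SA \<eta> L l. \<exists>c. -4 * real l / \<eta> \<le> c \<and> c \<le> 4 * real l / \<eta> \<and>
        pmf \<sigma> x / pmf \<sigma> y = pmf (piA \<eta> L) x / pmf (piA \<eta> L) y * exp c)}"

end

theory Submission
  imports Defs
begin

text \<open>
  Write p = \<eta>^-2 and \<mu>* for the point at which every bit X_j is set. The ratio condition
  on \<sigma> gives \<sigma>(\<mu>*) \<pi>(y) \<le> e^(4l/\<eta>) \<pi>(\<mu>*) \<sigma>(y) for every y in the finite support S_l;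
  summing over S_l yields \<sigma>(\<mu>*) \<pi>(S_l) \<le> e^(4l/\<eta>) \<pi>(\<mu>*). The value \<mu>* is attained only
  when all bits are set, so \<pi>(\<mu>*) \<le> p^|A| with A the odd indices up to L, while S_l contains
  every outcome whose bits up to l are set, so \<pi>(S_l) \<ge> p^|A \<inter> [1,l]|. Dividing leaves p raised
  to the number of odd indices in (l, L].
\<close>

lemma pmf_mult_measure_le_of_cross_bound:
  fixes \<sigma> \<pi> :: "'a pmf"
  assumes "finite S" "set_pmf \<sigma> \<subseteq> S"
    and cross: "\<And>y. y \<in> S \<Longrightarrow> pmf \<sigma> x * pmf \<pi> y \<le> C * pmf \<pi> x * pmf \<sigma> y"
  shows "pmf \<sigma> x * measure_pmf.prob \<pi> S \<le> C * pmf \<pi> x"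
proof -
  have "pmf \<sigma> x * measure_pmf.prob \<pi> S = (\<Sum>y\<in>S. pmf \<sigma> x * pmf \<pi> y)"
    using assms(1) by (simp add: measure_measure_pmf_finite sum_distrib_left)
  also have "\<dots> \<le> (\<Sum>y\<in>S. C * pmf \<pi> x * pmf \<sigma> y)"
    by (intro sum_mono cross)
  also have "\<dots> = C * pmf \<pi> x"
    using sum_pmf_eq_1[OF assms(1,2)] by (simp add: sum_distrib_left[symmetric])
  finally show ?thesis .
qed

lemma cross_le_of_ratio_eq:
  fixes a b u v c K :: real
  assumes "b > 0" "u \<ge> 0" "v \<ge> 0" "a / b = u / v * exp c" "c \<le> K"
  shows "a * v \<le> exp K * u * b"
proof (cases "v = 0")
  case False
  then have "a * v = u * exp c * b"
    using assms(1,3,4) by (simp add: field_simps)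
  also have "\<dots> \<le> u * exp K * b"
    using assms(1,2,5) by (intro mult_right_mono mult_left_mono) auto
  finally show ?thesis by (simp add: algebra_simps)
qed (use assms in auto)

lemma measure_Pi_pmf_bernoulli_true_on:
  assumes "finite A" "0 \<le> p" "p \<le> 1"
  shows "measure_pmf.prob (Pi_pmf A False (\<lambda>_. bernoulli_pmf p))
           (Pi A (\<lambda>j. if j \<in> B then {True} else UNIV)) = p ^ card (A \<inter> B)"
proof -
  have "measure_pmf.prob (bernoulli_pmf p) {True} = p"
    using assms(2,3) by (simp add: measure_pmf_single)
  then have "measure_pmf.prob (Pi_pmf A False (\<lambda>_. bernoulli_pmf p))
           (Pi A (\<lambda>j. if j \<in> B then {True} else UNIV)) = (\<Prod>j\<in>A. if j \<in> B then p else 1)"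
    by (subst measure_Pi_pmf_Pi[OF assms(1)]) (auto intro!: prod.cong)
  also have "\<dots> = p ^ card (A \<inter> B)"
    using assms(1) by (simp add: prod.If_cases)
  finally show ?thesis .
qed

lemma finite_oddIdx: "finite (oddIdx L)"
  unfolding oddIdx_def by (rule finite_subset[of _ "{..L}"]) auto

lemma sum_oddIdx_split:
  "(\<Sum>j\<in>oddIdx L. f j) = (\<Sum>j\<in>{j\<in>oddIdx L. j \<le> l}. f j) + (\<Sum>j\<in>{j\<in>oddIdx L. l < j}. f j)"
proof -
  have "oddIdx L = {j\<in>oddIdx L. j \<le> l} \<union> {j\<in>oddIdx L. l < j}" by auto
  then show ?thesis
    using finite_oddIdx by (metis (no_types, lifting) sum.union_disjoint finite_Un
        disjoint_iff mem_Collect_eq not_le)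
qed

lemma card_oddIdx_split:
  "card (oddIdx L) = card {j\<in>oddIdx L. j \<le> l} + card {j\<in>oddIdx L. l < j}"
  using sum_oddIdx_split[of "\<lambda>_. 1 :: nat"] by simp

lemma muA_all_true: "muA \<eta> L (\<lambda>_. True) = 1/2 + 2 * (\<Sum>j\<in>oddIdx L. 1 / \<eta> ^ j)"
  by (simp add: muA_def)

lemma muA_eq_all_true_imp:
  assumes "\<eta> > 0" "muA \<eta> L X = muA \<eta> L (\<lambda>_. True)" "j \<in> oddIdx L"
  shows "X j"
proof (rule ccontr)
  assume "\<not> X j"
  then have "(\<Sum>i\<in>oddIdx L. (if X i then 1 else 0) / \<eta> ^ i) < (\<Sum>i\<in>oddIdx L. 1 / \<eta> ^ i)"
    using assms(1,3) by (intro sum_strict_mono_ex1[OF finite_oddIdx]) auto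
  with assms(2) show False by (simp add: muA_def)
qed

lemma muA_in_SA:
  assumes "\<And>j. j \<in> oddIdx L \<Longrightarrow> j \<le> l \<Longrightarrow> X j"
  shows "muA \<eta> L X \<in> SA \<eta> L l"
proof -
  have "(\<Sum>j\<in>{j\<in>oddIdx L. j \<le> l}. (if X j then 1 else 0) / \<eta> ^ j)
      = (\<Sum>j\<in>{j\<in>oddIdx L. j \<le> l}. 1 / \<eta> ^ j)"
    using assms by (intro sum.cong) auto
  then show ?thesis
    unfolding SA_def muA_def sum_oddIdx_split[of _ L l] by (auto simp: algebra_simps)
qed

lemma finite_SA: "finite (SA \<eta> L l)"
proof -
  define g where "g T = 1/2 + 2 * (\<Sum>j\<in>{j\<in>oddIdx L. j \<le> l}. 1 / \<eta> ^ j)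
      + 2 * (\<Sum>j\<in>{j\<in>oddIdx L. l < j}. (if j \<in> T then 1 else 0) / \<eta> ^ j)" for T
  have "SA \<eta> L l \<subseteq> g ` Pow (oddIdx L)"
  proof
    fix y assume "y \<in> SA \<eta> L l"
    then obtain X where "y = 1/2 + 2 * (\<Sum>j\<in>{j\<in>oddIdx L. j \<le> l}. 1 / \<eta> ^ j)
        + 2 * (\<Sum>j\<in>{j\<in>oddIdx L. l < j}. (if X j then 1 else 0) / \<eta> ^ j)"
      unfolding SA_def by auto
    then have "y = g {j\<in>oddIdx L. X j}"
      unfolding g_def by (auto intro!: sum.cong)
    then show "y \<in> g ` Pow (oddIdx L)" by auto
  qed
  then show ?thesis using finite_oddIdx finite_subset by blast
qed

lemma pmf_piA_all_true_le:
  assumes "\<eta> \<ge> 1"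
  shows "pmf (piA \<eta> L) (muA \<eta> L (\<lambda>_. True)) \<le> (1 / \<eta>\<^sup>2) ^ card (oddIdx L)"
proof -
  have "muA \<eta> L -` {muA \<eta> L (\<lambda>_. True)} \<subseteq> Pi (oddIdx L) (\<lambda>j. if j \<in> UNIV then {True} else UNIV)"
    using muA_eq_all_true_imp[of \<eta>] assms by auto
  then have "pmf (piA \<eta> L) (muA \<eta> L (\<lambda>_. True))
      \<le> measure_pmf.prob (Pi_pmf (oddIdx L) False (\<lambda>_. bernoulli_pmf (1 / \<eta>\<^sup>2)))
          (Pi (oddIdx L) (\<lambda>j. if j \<in> UNIV then {True} else UNIV))"
    unfolding piA_def by (simp add: pmf_map measure_pmf.finite_measure_mono)
  also have "\<dots> = (1 / \<eta>\<^sup>2) ^ card (oddIdx L)"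
    using assms by (subst measure_Pi_pmf_bernoulli_true_on[OF finite_oddIdx]) auto
  finally show ?thesis .
qed

lemma measure_piA_SA_ge:
  assumes "\<eta> \<ge> 1"
  shows "(1 / \<eta>\<^sup>2) ^ card {j\<in>oddIdx L. j \<le> l} \<le> measure_pmf.prob (piA \<eta> L) (SA \<eta> L l)"
proof -
  have "Pi (oddIdx L) (\<lambda>j. if j \<in> {..l} then {True} else UNIV) \<subseteq> muA \<eta> L -` SA \<eta> L l"
    by (auto intro!: muA_in_SA simp: Pi_iff) (metis singletonD)
  then have "measure_pmf.prob (Pi_pmf (oddIdx L) False (\<lambda>_. bernoulli_pmf (1 / \<eta>\<^sup>2)))
        (Pi (oddIdx L) (\<lambda>j. if j \<in> {..l} then {True} else UNIV))
      \<le> measure_pmf.prob (piA \<eta> L) (SA \<eta> L l)"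
    unfolding piA_def by (simp add: measure_pmf.finite_measure_mono)
  moreover have "oddIdx L \<inter> {..l} = {j\<in>oddIdx L. j \<le> l}" by auto
  ultimately show ?thesis
    using assms by (subst (asm) measure_Pi_pmf_bernoulli_true_on[OF finite_oddIdx]) auto
qed

lemma DA_cross_bound:
  assumes "\<sigma> \<in> DA \<eta> L l" "y \<in> SA \<eta> L l"
  shows "pmf \<sigma> (muA \<eta> L (\<lambda>_. True)) * pmf (piA \<eta> L) y
           \<le> exp (4 * real l / \<eta>) * pmf (piA \<eta> L) (muA \<eta> L (\<lambda>_. True)) * pmf \<sigma> y"
proof -
  have top: "muA \<eta> L (\<lambda>_. True) \<in> SA \<eta> L l" by (rule muA_in_SA) simp
  obtain c where "c \<le> 4 * real l / \<eta>" and "pmf \<sigma> (muA \<eta> L (\<lambda>_. True)) / pmf \<sigma> y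
      = pmf (piA \<eta> L) (muA \<eta> L (\<lambda>_. True)) / pmf (piA \<eta> L) y * exp c"
    using assms top unfolding DA_def by blast
  moreover have "pmf \<sigma> y > 0"
    using assms unfolding DA_def by (auto simp: pmf_positive)
  ultimately show ?thesis by (intro cross_le_of_ratio_eq) auto
qed

lemma pmf_DA_all_true_le:
  assumes "\<eta> \<ge> 1" "\<sigma> \<in> DA \<eta> L l"
  shows "pmf \<sigma> (muA \<eta> L (\<lambda>_. True))
           \<le> exp (4 * real l / \<eta>) * (1 / \<eta>\<^sup>2) ^ card {j\<in>oddIdx L. l < j}"
proof -
  let ?p = "1 / \<eta>\<^sup>2 :: real" and ?top = "muA \<eta> L (\<lambda>_. True)" and ?K = "exp (4 * real l / \<eta>)"
  let ?low = "{j\<in>oddIdx L. j \<le> l}" and ?high = "{j\<in>oddIdx L. l < j}"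
  have "set_pmf \<sigma> = SA \<eta> L l" using assms(2) unfolding DA_def by blast
  have "pmf \<sigma> ?top * ?p ^ card ?low \<le> pmf \<sigma> ?top * measure_pmf.prob (piA \<eta> L) (SA \<eta> L l)"
    using measure_piA_SA_ge[OF assms(1)] by (simp add: mult_left_mono)
  also have "\<dots> \<le> ?K * pmf (piA \<eta> L) ?top"
    using \<open>set_pmf \<sigma> = SA \<eta> L l\<close> assms(2)
    by (intro pmf_mult_measure_le_of_cross_bound finite_SA DA_cross_bound) auto
  also have "\<dots> \<le> ?K * ?p ^ card (oddIdx L)"
    using pmf_piA_all_true_le[OF assms(1)] by simp
  also have "\<dots> = (?K * ?p ^ card ?high) * ?p ^ card ?low"
    by (simp add: card_oddIdx_split[of L l] power_add)
  finally show ?thesis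
    by (rule mult_right_le_imp_le) (use assms(1) in simp)
qed

lemma inverse_square_power_eq_powr:
  fixes x :: real
  assumes "x > 0"
  shows "(1 / x\<^sup>2) ^ k = x powr (- 2 * real k)"
proof -
  have "x powr (- 2 * real k) = inverse (x powr real (2 * k))"
    by (simp add: powr_minus)
  also have "x powr real (2 * k) = x ^ (2 * k)"
    using assms by (rule powr_realpow)
  finally show ?thesis
    by (simp add: power_mult power_one_over divide_inverse power_inverse)
qed

theorem lemma9:
  fixes n R L l :: nat and \<eta> \<mu>star :: real and \<sigma> :: "real pmf"
  assumes "n \<ge> 1" and "R \<ge> 1" and "L = 6 * R"
    and "\<eta> = real n powr (1 / (2 * real L))"
    and "\<mu>star = 1/2 + 2 * (\<Sum>j\<in>oddIdx L. 1 / \<eta> ^ j)"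
    and "l \<le> L"
    and "\<sigma> \<in> DA \<eta> L l"
  shows "pmf \<sigma> \<mu>star \<le> exp (4 * real l / \<eta>) * \<eta> powr (- 2 * real (card {j. odd j \<and> l + 1 \<le> j \<and> j \<le> L}))"
proof -
  have \<eta>: "\<eta> \<ge> 1" using assms(1,4) by (simp add: ge_one_powr_ge_zero)
  have "{j. odd j \<and> l + 1 \<le> j \<and> j \<le> L} = {j\<in>oddIdx L. l < j}"
    unfolding oddIdx_def by auto
  moreover have "(1 / \<eta>\<^sup>2) ^ k = \<eta> powr (- 2 * real k)" for k
    using \<eta> by (intro inverse_square_power_eq_powr) simp
  ultimately show ?thesis
    using pmf_DA_all_true_le[OF \<eta> assms(7)] by (simp add: assms(5) muA_all_true)
qed

end
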